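(* Let $\mathcal C$ be a category and $n\ge0$. Every degeneracy map in $Z^n(\mathcal C)$ is a monomorphism.
   Context: Notation: for $n\ge 0$, $[n]$ denotes $\{0,\dots,n-1\}$; $\Delta_+$ is the category of these finite total orders and order-preserving maps. For monotone $\varphi:[n]\to[m]$ define $\hat\varphi:[m+1]\to[n+1]$ by $\hat\varphi(i)=\min(\{j\in[n]:\varphi(j)\ge i\}\cup\{n\})$. Zigzags: in a category $\mathcal C$, a zigzag $X$ of length $n$ is a diagram $X(r_0)\xrightarrow{x_0} X(s_0)\xleftarrow{x'_0} X(r_1)\to\cdots\xrightarrow{x_{n-1}} X(s_{n-1})\xleftarrow{x'_{n-1}} X(r_n)$. A zigzag map $f:X\to Y$ (lengths $n$, $m$) consists of a monotone $f_s:[n]\to[m]$, regular slices $f(r_i):X(r_{\hat{f_s}(i)})\to Y(r_i)$ for $0\le i\le m$ and singular slices $f(s_j):X(s_j)\to Y(s_{f_s(j)})$ for $0\le j<n$, such that for each $0\le i<m$: if $f_s^{-1}(i)\neq\emptyset$ with least element $p$, greatest $q$, then $f(s_p)\circ x_p=y_i\circ f(r_i)$, $f(s_q)\circ x'_q=y'_i\circ f(r_{i+1})$, $f(s_j)\circ x'_j=f(s_{j+1})\circ x_{j+1}$ for $p\le j<q$; if $f_s^{-1}(i)=\emptyset$ then $y_i\circ f(r_i)=y'_i\circ f(r_{i+1})$. Composition: $(g\circ f)_s=g_s\circ f_s$, $(g\circ f)(s_j)=g(s_{f_s(j)})\circ f(s_j)$, $(g\circ f)(r_i)=g(r_i)\circ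 f(r_{\hat{g_s}(i)})$. This gives a category $Z(\mathcal C)$; $Z^0(\mathcal C)=\mathcal C$, $Z^n(\mathcal C)=Z(Z^{n-1}(\mathcal C))$. $\pi:Z(\mathcal C)\to\Delta_+$ sends a zigzag of length $n$ to $[n]$ and $f$ to $f_s$; $f$ is $\pi$-vertical if $\pi(f)$ is an identity; $f:x\to y$ is $\pi$-cocartesian if for every $h:x\to y'$ and $u:\pi(y)\to\pi(y')$ with $u\circ\pi(f)=\pi(h)$ there is a unique $v:y\to y'$ with $v\circ f=h$, $\pi(v)=u$. Degeneracy maps in $Z^n(\mathcal C)$ (by induction on $n$): in $Z^0(\mathcal C)$ the isomorphisms; for $n\ge1$ the maps generated under composition by simple degeneracy maps (the $\pi$-cocartesian maps $f$ with $\pi(f)$ a monomorphism of $\Delta_+$) and parallel degeneracy maps (the $\pi$-vertical maps whose regular and singular slices are all degeneracy maps in $Z^{n-1}(\mathcal C)$). *)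

theory Defs
  imports Main
begin

record 'c cat =
  Ob :: "'c set"
  Hom :: "'c set"
  Dom :: "'c \<Rightarrow> 'c"
  Cod :: "'c \<Rightarrow> 'c"
  Comp :: "'c \<Rightarrow> 'c \<Rightarrow> 'c"   (* Comp C g f = g \<circ> f *)
  Ident :: "'c \<Rightarrow> 'c"

definition category :: "('c, 'z) cat_scheme \<Rightarrow> bool" where
  "category C \<longleftrightarrow>
     (\<forall>f\<in>Hom C. Dom C f \<in> Ob C \<and> Cod C f \<in> Ob C) \<and>
     (\<forall>a\<in>Ob C. Ident C a \<in> Hom C \<and> Dom C (Ident C a) = a \<and> Cod C (Ident C a) = a) \<and>
     (\<forall>f\<in>Hom C. \<forall>g\<in>Hom C. Cod C f = Dom C g \<longrightarrow>
        Comp C g f \<in> Hom C \<and> Dom C (Comp C g f) = Dom C f \<and> Cod C (Comp C g f) = Cod C g) \<and>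
     (\<forall>f\<in>Hom C. \<forall>g\<in>Hom C. \<forall>h\<in>Hom C. Cod C f = Dom C g \<longrightarrow> Cod C g = Dom C h \<longrightarrow>
        Comp C h (Comp C g f) = Comp C (Comp C h g) f) \<and>
     (\<forall>f\<in>Hom C. Comp C f (Ident C (Dom C f)) = f \<and> Comp C (Ident C (Cod C f)) f = f)"

definition monic :: "'c cat \<Rightarrow> 'c \<Rightarrow> bool" where
  "monic E f \<longleftrightarrow> f \<in> Hom E \<and>
     (\<forall>g h. g \<in> Hom E \<longrightarrow> h \<in> Hom E \<longrightarrow> Dom E g = Dom E h \<longrightarrow>
        Cod E g = Dom E f \<longrightarrow> Cod E h = Dom E f \<longrightarrow> Comp E f g = Comp E f h \<longrightarrow> g = h)"

definition isos :: "'c cat \<Rightarrow> 'c set" where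
  "isos E = {f \<in> Hom E. \<exists>g\<in>Hom E. Dom E g = Cod E f \<and> Cod E g = Dom E f \<and>
      Comp E g f = Ident E (Dom E f) \<and> Comp E f g = Ident E (Cod E f)}"

inductive_set gen :: "'c cat \<Rightarrow> 'c set \<Rightarrow> 'c set" for E S where
  base: "f \<in> S \<Longrightarrow> f \<in> gen E S"
| comp: "f \<in> gen E S \<Longrightarrow> g \<in> gen E S \<Longrightarrow> Cod E f = Dom E g \<Longrightarrow> Comp E g f \<in> gen E S"

section \<open>The augmented simplex category \<Delta>+: a map [n] \<rightarrow> [m] is a list of length n\<close>

definition delta_arr :: "nat \<Rightarrow> nat \<Rightarrow> nat list \<Rightarrow> bool" where
  "delta_arr n m \<phi> \<longleftrightarrow> length \<phi> = n \<and> sorted \<phi> \<and> (\<forall>j<n. \<phi> ! j < m)"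

definition delta_comp :: "nat list \<Rightarrow> nat list \<Rightarrow> nat list" where
  "delta_comp \<psi> \<phi> = map (\<lambda>j. \<psi> ! (\<phi> ! j)) [0..<length \<phi>]"

definition delta_mono :: "nat \<Rightarrow> nat \<Rightarrow> nat list \<Rightarrow> bool" where
  "delta_mono n m \<phi> \<longleftrightarrow> delta_arr n m \<phi> \<and>
     (\<forall>k g h. delta_arr k n g \<longrightarrow> delta_arr k n h \<longrightarrow> delta_comp \<phi> g = delta_comp \<phi> h \<longrightarrow> g = h)"

definition hat :: "nat list \<Rightarrow> nat \<Rightarrow> nat" where
  "hat \<phi> i = (LEAST j. j = length \<phi> \<or> (j < length \<phi> \<and> i \<le> \<phi> ! j))"

section \<open>Universe of iterated zigzags\<close>

datatype 'c zt =
    Base (base_val: 'c)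
  | ZObj (zreg: "'c zt list") (zsing: "'c zt list") (zfw: "'c zt list") (zbw: "'c zt list")
      (* regular objects r_0..r_n, singular objects s_0..s_{n-1}, maps x_i : r_i \<rightarrow> s_i, x'_i : r_{i+1} \<rightarrow> s_i *)
  | ZArr (adom: "'c zt") (acod: "'c zt") (amap: "nat list") (areg: "'c zt list") (asing: "'c zt list")
      (* source, target, f_s, regular slices f(r_0..r_m), singular slices f(s_0..s_{n-1}) *)

definition zlen :: "'c zt \<Rightarrow> nat" where
  "zlen X = length (zsing X)"

definition is_zobj :: "'c zt cat \<Rightarrow> 'c zt \<Rightarrow> bool" where
  "is_zobj C X \<longleftrightarrow> (\<exists>rs ss xs xs'. X = ZObj rs ss xs xs' \<and>
     length rs = Suc (length ss) \<and> length xs = length ss \<and> length xs' = length ss \<and>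
     set rs \<subseteq> Ob C \<and> set ss \<subseteq> Ob C \<and>
     (\<forall>i<length ss. xs ! i \<in> Hom C \<and> Dom C (xs ! i) = rs ! i \<and> Cod C (xs ! i) = ss ! i \<and>
        xs' ! i \<in> Hom C \<and> Dom C (xs' ! i) = rs ! Suc i \<and> Cod C (xs' ! i) = ss ! i))"

definition zig_cond :: "'c zt cat \<Rightarrow> 'c zt \<Rightarrow> 'c zt \<Rightarrow> nat list \<Rightarrow> 'c zt list \<Rightarrow> 'c zt list \<Rightarrow> nat \<Rightarrow> bool" where
  "zig_cond C X Y fs fr fsg i \<longleftrightarrow>
     (let P = {j. j < length fs \<and> fs ! j = i}; x = zfw X; x' = zbw X; y = zfw Y; y' = zbw Y in
      (P \<noteq> {} \<longrightarrow>
         Comp C (fsg ! Min P) (x ! Min P) = Comp C (y ! i) (fr ! i) \<and>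
         Comp C (fsg ! Max P) (x' ! Max P) = Comp C (y' ! i) (fr ! Suc i) \<and>
         (\<forall>j. Min P \<le> j \<and> j < Max P \<longrightarrow> Comp C (fsg ! j) (x' ! j) = Comp C (fsg ! Suc j) (x ! Suc j))) \<and>
      (P = {} \<longrightarrow> Comp C (y ! i) (fr ! i) = Comp C (y' ! i) (fr ! Suc i)))"

definition is_zarr :: "'c zt cat \<Rightarrow> 'c zt \<Rightarrow> bool" where
  "is_zarr C f \<longleftrightarrow> (\<exists>X Y fs fr fsg. f = ZArr X Y fs fr fsg \<and> is_zobj C X \<and> is_zobj C Y \<and>
     delta_arr (zlen X) (zlen Y) fs \<and>
     length fr = Suc (zlen Y) \<and> length fsg = zlen X \<and>
     (\<forall>i\<le>zlen Y. fr ! i \<in> Hom C \<and> Dom C (fr ! i) = zreg X ! hat fs i \<and> Cod C (fr ! i) = zreg Y ! i) \<and>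
     (\<forall>j<zlen X. fsg ! j \<in> Hom C \<and> Dom C (fsg ! j) = zsing X ! j \<and> Cod C (fsg ! j) = zsing Y ! (fs ! j)) \<and>
     (\<forall>i<zlen Y. zig_cond C X Y fs fr fsg i))"

definition zcomp :: "'c zt cat \<Rightarrow> 'c zt \<Rightarrow> 'c zt \<Rightarrow> 'c zt" where
  "zcomp C g f = ZArr (adom f) (acod g)
     (delta_comp (amap g) (amap f))
     (map (\<lambda>i. Comp C (areg g ! i) (areg f ! hat (amap g) i)) [0..<length (areg g)])
     (map (\<lambda>j. Comp C (asing g ! (amap f ! j)) (asing f ! j)) [0..<length (amap f)])"

definition zid :: "'c zt cat \<Rightarrow> 'c zt \<Rightarrow> 'c zt" where
  "zid C X = ZArr X X [0..<zlen X] (map (Ident C) (zreg X)) (map (Ident C) (zsing X))"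

definition Z :: "'c zt cat \<Rightarrow> 'c zt cat" where
  "Z C = \<lparr>Ob = {X. is_zobj C X}, Hom = {f. is_zarr C f}, Dom = adom, Cod = acod,
          Comp = zcomp C, Ident = zid C\<rparr>"

definition lift :: "'c cat \<Rightarrow> 'c zt cat" where
  "lift C = \<lparr>Ob = Base ` Ob C, Hom = Base ` Hom C,
             Dom = (\<lambda>f. Base (Dom C (base_val f))), Cod = (\<lambda>f. Base (Cod C (base_val f))),
             Comp = (\<lambda>g f. Base (Comp C (base_val g) (base_val f))),
             Ident = (\<lambda>a. Base (Ident C (base_val a)))\<rparr>"

text \<open>Z^n(C), with Z^0(C) an isomorphic copy of C\<close>
definition Zit :: "nat \<Rightarrow> 'c cat \<Rightarrow> 'c zt cat" where
  "Zit n C = (Z ^^ n) (lift C)"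

section \<open>The projection \<pi> : Z(D) \<rightarrow> \<Delta>+ and degeneracy maps\<close>

definition vertical :: "'c zt \<Rightarrow> bool" where
  "vertical f \<longleftrightarrow> zlen (adom f) = zlen (acod f) \<and> amap f = [0..<zlen (adom f)]"

definition cocartesian :: "'c zt cat \<Rightarrow> 'c zt \<Rightarrow> bool" where
  "cocartesian D f \<longleftrightarrow> f \<in> Hom (Z D) \<and>
     (\<forall>h u. h \<in> Hom (Z D) \<longrightarrow> adom h = adom f \<longrightarrow>
        delta_arr (zlen (acod f)) (zlen (acod h)) u \<longrightarrow> delta_comp u (amap f) = amap h \<longrightarrow>
        (\<exists>!v. v \<in> Hom (Z D) \<and> adom v = acod f \<and> acod v = acod h \<and>
              zcomp D v f = h \<and> amap v = u))"

definition simple_degen :: "'c zt cat \<Rightarrow> 'c zt set" where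
  "simple_degen D = {f. cocartesian D f \<and> delta_mono (zlen (adom f)) (zlen (acod f)) (amap f)}"

definition parallel_degen :: "'c zt cat \<Rightarrow> 'c zt set \<Rightarrow> 'c zt set" where
  "parallel_degen D S = {f \<in> Hom (Z D). vertical f \<and> set (areg f) \<subseteq> S \<and> set (asing f) \<subseteq> S}"

fun degen :: "nat \<Rightarrow> 'c cat \<Rightarrow> 'c zt set" where
  "degen 0 C = isos (lift C)"
| "degen (Suc k) C = gen (Z (Zit k C)) (simple_degen (Zit k C) \<union> parallel_degen (Zit k C) (degen k C))"

end

theory Submission
  imports Defs
begin

(* Since Z(D) is a
   category whenever D is and monomorphisms compose, induction on n reduces the claim to the
   generators. A zigzag map is monic as soon as its component in the simplex category is monic,
   its singular slices are monic, and every regular height of its source is the image under hat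
   of a height carrying a monic regular slice. Parallel degeneracies satisfy this by induction.
   For a simple degeneracy f : X -> Y over an injective delta, pad X with identity cospans at the
   heights missed by delta: the evident map from X to the padded zigzag has identity slices, and
   cocartesianness factors it as v o f, so every slice of f is a split monomorphism. *)

section \<open>Monomorphisms in a category\<close>

lemma cat_id_hom: "category E \<Longrightarrow> a \<in> Ob E \<Longrightarrow> Ident E a \<in> Hom E"
  and cat_id_dom: "category E \<Longrightarrow> a \<in> Ob E \<Longrightarrow> Dom E (Ident E a) = a"
  and cat_id_cod: "category E \<Longrightarrow> a \<in> Ob E \<Longrightarrow> Cod E (Ident E a) = a"
  and cat_comp_hom: "category E \<Longrightarrow> f \<in> Hom E \<Longrightarrow> g \<in> Hom E \<Longrightarrow> Cod E f = Dom E g \<Longrightarrow>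
    Comp E g f \<in> Hom E"
  and cat_comp_dom: "category E \<Longrightarrow> f \<in> Hom E \<Longrightarrow> g \<in> Hom E \<Longrightarrow> Cod E f = Dom E g \<Longrightarrow>
    Dom E (Comp E g f) = Dom E f"
  and cat_comp_cod: "category E \<Longrightarrow> f \<in> Hom E \<Longrightarrow> g \<in> Hom E \<Longrightarrow> Cod E f = Dom E g \<Longrightarrow>
    Cod E (Comp E g f) = Cod E g"
  and cat_assoc: "category E \<Longrightarrow> f \<in> Hom E \<Longrightarrow> g \<in> Hom E \<Longrightarrow> h \<in> Hom E \<Longrightarrow>
    Cod E f = Dom E g \<Longrightarrow> Cod E g = Dom E h \<Longrightarrow> Comp E h (Comp E g f) = Comp E (Comp E h g) f"
  and cat_id_left: "category E \<Longrightarrow> f \<in> Hom E \<Longrightarrow> Cod E f = b \<Longrightarrow> Comp E (Ident E b) f = f"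
  and cat_id_right: "category E \<Longrightarrow> f \<in> Hom E \<Longrightarrow> Dom E f = a \<Longrightarrow> Comp E f (Ident E a) = f"
  unfolding category_def by blast+

lemmas cat_id_simps = cat_id_hom cat_id_dom cat_id_cod cat_id_left cat_id_right
lemmas cat_comp_simps = cat_comp_hom cat_comp_dom cat_comp_cod

lemma monicD:
  "monic E f \<Longrightarrow> a \<in> Hom E \<Longrightarrow> b \<in> Hom E \<Longrightarrow> Dom E a = Dom E b \<Longrightarrow>
    Cod E a = Dom E f \<Longrightarrow> Cod E b = Dom E f \<Longrightarrow> Comp E f a = Comp E f b \<Longrightarrow> a = b"
  unfolding monic_def by blast

lemma split_mono_imp_monic:
  assumes E: "category E" and f: "f \<in> Hom E" and r: "r \<in> Hom E" "Cod E f = Dom E r"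
    and retraction: "Comp E r f = Ident E (Dom E f)"
  shows "monic E f"
  unfolding monic_def
proof (intro conjI allI impI)
  fix a b assume a: "a \<in> Hom E" "Cod E a = Dom E f" and b: "b \<in> Hom E" "Cod E b = Dom E f"
    and eq: "Comp E f a = Comp E f b"
  have "a = Comp E (Comp E r f) a" using E a f by (simp add: retraction cat_id_left)
  also have "\<dots> = Comp E r (Comp E f a)" using E a f r by (simp add: cat_assoc)
  also have "\<dots> = Comp E (Comp E r f) b" using E b f r by (simp add: cat_assoc eq)
  also have "\<dots> = b" using E b f by (simp add: retraction cat_id_left)
  finally show "a = b" .
qed (fact f)

lemma iso_imp_monic: "category E \<Longrightarrow> f \<in> isos E \<Longrightarrow> monic E f"
  unfolding isos_def by (auto intro: split_mono_imp_monic)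

lemma monic_comp:
  assumes E: "category E" and f: "monic E f" and g: "monic E g" and fg: "Cod E f = Dom E g"
  shows "monic E (Comp E g f)"
proof -
  have hom: "f \<in> Hom E" "g \<in> Hom E" using f g unfolding monic_def by auto
  show ?thesis unfolding monic_def
  proof (intro conjI allI impI)
    show "Comp E g f \<in> Hom E" using E hom fg by (rule cat_comp_hom)
    fix a b assume a: "a \<in> Hom E" "Cod E a = Dom E (Comp E g f)"
      and b: "b \<in> Hom E" "Cod E b = Dom E (Comp E g f)" and ab: "Dom E a = Dom E b"
      and eq: "Comp E (Comp E g f) a = Comp E (Comp E g f) b"
    have "Comp E g (Comp E f a) = Comp E g (Comp E f b)"
      using E hom fg a b eq by (simp add: cat_assoc cat_comp_dom)
    then have "Comp E f a = Comp E f b"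
      using g E hom fg a b ab unfolding monic_def by (simp add: cat_comp_simps)
    then show "a = b" using f E hom fg a b ab unfolding monic_def by (simp add: cat_comp_dom)
  qed
qed

lemma gen_monic:
  assumes "category E" and "\<And>s. s \<in> S \<Longrightarrow> monic E s" and "f \<in> gen E S"
  shows "monic E f"
  using assms(3) by induction (auto intro: assms(2) monic_comp[OF assms(1)])

section \<open>The augmented simplex category\<close>

lemma delta_comp_length [simp]: "length (delta_comp \<psi> \<phi>) = length \<phi>"
  and delta_comp_nth [simp]: "j < length \<phi> \<Longrightarrow> delta_comp \<psi> \<phi> ! j = \<psi> ! (\<phi> ! j)"
  by (simp_all add: delta_comp_def)

lemma delta_arr_comp: "delta_arr n m \<phi> \<Longrightarrow> delta_arr m l \<psi> \<Longrightarrow> delta_arr n l (delta_comp \<psi> \<phi>)"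
  unfolding delta_arr_def by (auto simp: sorted_iff_nth_mono)

lemma delta_comp_assoc:
  "\<forall>j<length \<phi>. \<phi> ! j < length \<psi> \<Longrightarrow>
    delta_comp \<chi> (delta_comp \<psi> \<phi>) = delta_comp (delta_comp \<chi> \<psi>) \<phi>"
  by (rule nth_equalityI) auto

lemma delta_comp_id_left: "delta_arr n m \<phi> \<Longrightarrow> delta_comp [0..<m] \<phi> = \<phi>"
  unfolding delta_arr_def by (intro nth_equalityI) auto

lemma delta_comp_id_right: "length \<phi> = n \<Longrightarrow> delta_comp \<phi> [0..<n] = \<phi>"
  by (intro nth_equalityI) auto

lemma delta_mono_id: "delta_mono n n [0..<n]"
proof -
  have "delta_arr n n [0..<n]" by (simp add: delta_arr_def)
  then show ?thesis unfolding delta_mono_def by (metis delta_comp_id_left)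
qed

lemma delta_mono_imp_distinct:
  assumes "delta_mono n m \<phi>" shows "distinct \<phi>"
proof -
  have "p = q" if "p < n" "q < n" "\<phi> ! p = \<phi> ! q" for p q
  proof -
    have "delta_arr 1 n [p]" "delta_arr 1 n [q]" using that by (auto simp: delta_arr_def)
    moreover have "delta_comp \<phi> [p] = delta_comp \<phi> [q]" using that by (simp add: delta_comp_def)
    ultimately show "p = q" using assms unfolding delta_mono_def by blast
  qed
  moreover have "length \<phi> = n" using assms by (simp add: delta_mono_def delta_arr_def)
  ultimately show ?thesis by (auto simp: distinct_conv_nth)
qed

lemma hat_le: "hat \<phi> i \<le> length \<phi>"
  unfolding hat_def by (rule Least_le) simp

lemma hat_galois:
  assumes "sorted \<phi>" "k < length \<phi>" shows "hat \<phi> i \<le> k \<longleftrightarrow> i \<le> \<phi> ! k"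
proof
  assume "i \<le> \<phi> ! k" then show "hat \<phi> i \<le> k"
    unfolding hat_def using assms by (intro Least_le) simp
next
  assume "hat \<phi> i \<le> k"
  moreover have "hat \<phi> i = length \<phi> \<or> (hat \<phi> i < length \<phi> \<and> i \<le> \<phi> ! hat \<phi> i)"
    unfolding hat_def by (rule LeastI[of _ "length \<phi>"]) simp
  ultimately show "i \<le> \<phi> ! k" using assms by (auto simp: sorted_iff_nth_mono intro: order_trans)
qed

lemma hat_unique:
  assumes "sorted \<phi>" "h \<le> length \<phi>" "\<And>k. k < length \<phi> \<Longrightarrow> h \<le> k \<longleftrightarrow> i \<le> \<phi> ! k"
  shows "hat \<phi> i = h"
proof -
  have "hat \<phi> i \<le> k \<longleftrightarrow> h \<le> k" if "k < length \<phi>" for k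
    using assms that by (simp add: hat_galois)
  then show ?thesis using assms(2) hat_le[of \<phi> i]
    by (metis antisym_conv2 dual_order.refl order.strict_trans2)
qed

lemma hat_id: "i \<le> n \<Longrightarrow> hat [0..<n] i = i"
  by (rule hat_unique) auto

lemma hat_top: "delta_arr n m \<phi> \<Longrightarrow> hat \<phi> m = n"
  by (rule hat_unique) (auto simp: delta_arr_def)

lemma hat_mono: assumes "sorted \<phi>" "i \<le> i'" shows "hat \<phi> i \<le> hat \<phi> i'"
proof (cases "hat \<phi> i' < length \<phi>")
  case True
  then show ?thesis using hat_galois[OF assms(1) True, of i] hat_galois[OF assms(1) True, of i'] assms(2)
    by simp
qed (use hat_le[of \<phi> i] in simp)

lemma hat_comp:
  assumes "delta_arr n m \<phi>" "delta_arr m l \<psi>"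
  shows "hat (delta_comp \<psi> \<phi>) i = hat \<phi> (hat \<psi> i)"
proof (rule hat_unique)
  show "sorted (delta_comp \<psi> \<phi>)" using delta_arr_comp[OF assms] by (simp add: delta_arr_def)
qed (use assms hat_le in \<open>auto simp: delta_arr_def hat_galois\<close>)

lemma nth_eq_iff_hat:
  assumes "sorted \<phi>" "j < length \<phi>"
  shows "\<phi> ! j = i \<longleftrightarrow> hat \<phi> i \<le> j \<and> j < hat \<phi> (Suc i)"
  using hat_galois[OF assms, of i] hat_galois[OF assms, of "Suc i"] by auto

lemma fibre_eq_hat:
  assumes "sorted \<phi>" shows "{j. j < length \<phi> \<and> \<phi> ! j = i} = {hat \<phi> i..<hat \<phi> (Suc i)}"
  using nth_eq_iff_hat[OF assms] hat_le[of \<phi> "Suc i"] by fastforce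

lemma hat_Suc_notin:
  assumes "sorted \<phi>" "i \<notin> set \<phi>" shows "hat \<phi> (Suc i) = hat \<phi> i"
proof -
  have "{hat \<phi> i..<hat \<phi> (Suc i)} = {}"
    using fibre_eq_hat[OF assms(1), of i] assms(2) by (auto simp: in_set_conv_nth)
  then show ?thesis using hat_mono[OF assms(1), of i "Suc i"] by simp
qed

lemma
  assumes "sorted \<phi>" "distinct \<phi>" "p < length \<phi>"
  shows hat_nth: "hat \<phi> (\<phi> ! p) = p"
    and hat_Suc_nth: "hat \<phi> (Suc (\<phi> ! p)) = Suc p"
proof -
  have less: "\<phi> ! a < \<phi> ! b \<longleftrightarrow> a < b" if "a < length \<phi>" "b < length \<phi>" for a b
    using assms that by (metis linorder_neqE_nat not_less_iff_gr_or_eq sorted_wrt_iff_nth_less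
        strict_sorted_iff)
  then have le: "\<phi> ! a \<le> \<phi> ! b \<longleftrightarrow> a \<le> b" if "a < length \<phi>" "b < length \<phi>" for a b
    using that by (meson not_less)
  show "hat \<phi> (\<phi> ! p) = p"
    by (rule hat_unique) (use assms le in auto)
  show "hat \<phi> (Suc (\<phi> ! p)) = Suc p"
    by (rule hat_unique) (use assms less in \<open>auto simp: Suc_le_eq\<close>)
qed

lemma hat_in_set:
  assumes "sorted \<phi>" "distinct \<phi>" "i \<in> set \<phi>"
  shows "hat \<phi> i < length \<phi>" "\<phi> ! hat \<phi> i = i" "hat \<phi> (Suc i) = Suc (hat \<phi> i)"
proof -
  obtain p where "p < length \<phi>" "\<phi> ! p = i" using assms(3) by (auto simp: in_set_conv_nth)
  then show "hat \<phi> i < length \<phi>" "\<phi> ! hat \<phi> i = i" "hat \<phi> (Suc i) = Suc (hat \<phi> i)"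
    using hat_nth[OF assms(1,2)] hat_Suc_nth[OF assms(1,2)] by auto
qed

lemma hat_surj:
  assumes "delta_arr n m \<phi>" "distinct \<phi>" "k \<le> n"
  shows "\<exists>i\<le>m. hat \<phi> i = k"
proof (cases "k < n")
  case True
  then show ?thesis using assms hat_nth[of \<phi> k] by (auto simp: delta_arr_def intro!: exI[of _ "\<phi> ! k"])
qed (use assms hat_top in auto)

section \<open>Zigzag maps and their composition\<close>

lemma zobj_lengths:
  assumes "is_zobj D X"
  shows "length (zreg X) = Suc (zlen X)" "length (zfw X) = zlen X" "length (zbw X) = zlen X"
  using assms unfolding is_zobj_def zlen_def by auto

lemma
  assumes "is_zobj D X"
  shows zreg_ob: "i \<le> zlen X \<Longrightarrow> zreg X ! i \<in> Ob D"
    and zsing_ob: "i < zlen X \<Longrightarrow> zsing X ! i \<in> Ob D"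
    and zfw_hom: "i < zlen X \<Longrightarrow> zfw X ! i \<in> Hom D"
    and zfw_dom: "i < zlen X \<Longrightarrow> Dom D (zfw X ! i) = zreg X ! i"
    and zfw_cod: "i < zlen X \<Longrightarrow> Cod D (zfw X ! i) = zsing X ! i"
    and zbw_hom: "i < zlen X \<Longrightarrow> zbw X ! i \<in> Hom D"
    and zbw_dom: "i < zlen X \<Longrightarrow> Dom D (zbw X ! i) = zreg X ! Suc i"
    and zbw_cod: "i < zlen X \<Longrightarrow> Cod D (zbw X ! i) = zsing X ! i"
  using assms unfolding is_zobj_def zlen_def by (auto simp: less_Suc_eq_le[symmetric])

lemmas zobj_simps = zobj_lengths zreg_ob zsing_ob zfw_hom zfw_dom zfw_cod zbw_hom zbw_dom zbw_cod

lemma is_zobjI: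
  assumes "length rs = Suc (length ss)" "length xs = length ss" "length xs' = length ss"
    "\<And>i. i \<le> length ss \<Longrightarrow> rs ! i \<in> Ob D" "\<And>i. i < length ss \<Longrightarrow> ss ! i \<in> Ob D"
    "\<And>i. i < length ss \<Longrightarrow> xs ! i \<in> Hom D \<and> Dom D (xs ! i) = rs ! i \<and> Cod D (xs ! i) = ss ! i"
    "\<And>i. i < length ss \<Longrightarrow> xs' ! i \<in> Hom D \<and> Dom D (xs' ! i) = rs ! Suc i \<and> Cod D (xs' ! i) = ss ! i"
  shows "is_zobj D (ZObj rs ss xs xs')"
  unfolding is_zobj_def using assms by (auto simp: set_conv_nth less_Suc_eq_le)

lemma chain_conds_iff_legs:
  assumes "a < b"
  shows "(u a = A \<and> w (b - 1) = B \<and> (\<forall>j. a \<le> j \<and> j < b - 1 \<longrightarrow> w j = u (Suc j))) \<longleftrightarrow>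
    (\<forall>k. a \<le> k \<longrightarrow> k \<le> b \<longrightarrow> (if k < b then u k else B) = (if a < k then w (k - 1) else A))"
proof (intro iffI allI impI)
  fix k assume conds: "u a = A \<and> w (b - 1) = B \<and> (\<forall>j. a \<le> j \<and> j < b - 1 \<longrightarrow> w j = u (Suc j))"
    and k: "a \<le> k" "k \<le> b"
  consider "k = a" | "a < k" "k < b" | "k = b" using k by linarith
  then show "(if k < b then u k else B) = (if a < k then w (k - 1) else A)"
  proof cases
    case 2
    then have "a \<le> k - 1 \<and> k - 1 < b - 1" "Suc (k - 1) = k" by auto
    then have "w (k - 1) = u k" using conds by metis
    then show ?thesis using 2 by simp
  qed (use conds assms in auto)
next
  assume legs: "\<forall>k. a \<le> k \<longrightarrow> k \<le> b \<longrightarrow>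
    (if k < b then u k else B) = (if a < k then w (k - 1) else A)"
  have "w j = u (Suc j)" if "a \<le> j" "j < b - 1" for j
  proof -
    have "a \<le> Suc j" "Suc j \<le> b" "Suc j < b" "a < Suc j" using that by auto
    then show ?thesis using legs[rule_format, of "Suc j"] by simp
  qed
  then show "u a = A \<and> w (b - 1) = B \<and> (\<forall>j. a \<le> j \<and> j < b - 1 \<longrightarrow> w j = u (Suc j))"
    using legs[rule_format, of a] legs[rule_format, of b] assms by auto
qed

text \<open>The regular heights \<open>k\<close> of \<open>X\<close> with \<open>hat fs i \<le> k \<le> hat fs (Suc i)\<close> are those lying
  over the singular height \<open>i\<close> of \<open>Y\<close>. Each of them has two maps to \<open>Y(s\<^sub>i)\<close>: the right leg
  passes through the singular height of \<open>X\<close> just to its right (or through \<open>Y(r\<^sub>i\<^sub>+\<^sub>1)\<close> at the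
  right end), the left leg through the one just to its left (or through \<open>Y(r\<^sub>i)\<close>). The
  commutativity conditions on a zigzag map say precisely that the two legs agree.\<close>

definition right_leg :: "'c zt cat \<Rightarrow> 'c zt \<Rightarrow> 'c zt \<Rightarrow> nat list \<Rightarrow> 'c zt list \<Rightarrow> 'c zt list \<Rightarrow>
    nat \<Rightarrow> nat \<Rightarrow> 'c zt" where
  "right_leg D X Y fs fr fsg i k =
     (if k < hat fs (Suc i) then Comp D (fsg ! k) (zfw X ! k) else Comp D (zbw Y ! i) (fr ! Suc i))"

definition left_leg :: "'c zt cat \<Rightarrow> 'c zt \<Rightarrow> 'c zt \<Rightarrow> nat list \<Rightarrow> 'c zt list \<Rightarrow> 'c zt list \<Rightarrow>
    nat \<Rightarrow> nat \<Rightarrow> 'c zt" where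
  "left_leg D X Y fs fr fsg i k =
     (if hat fs i < k then Comp D (fsg ! (k - 1)) (zbw X ! (k - 1)) else Comp D (zfw Y ! i) (fr ! i))"

definition legs_agree :: "'c zt cat \<Rightarrow> 'c zt \<Rightarrow> 'c zt \<Rightarrow> nat list \<Rightarrow> 'c zt list \<Rightarrow> 'c zt list \<Rightarrow>
    bool" where
  "legs_agree D X Y fs fr fsg \<longleftrightarrow> (\<forall>i<zlen Y. \<forall>k. hat fs i \<le> k \<longrightarrow> k \<le> hat fs (Suc i) \<longrightarrow>
     right_leg D X Y fs fr fsg i k = left_leg D X Y fs fr fsg i k)"

lemma legs_agreeD:
  "legs_agree D X Y fs fr fsg \<Longrightarrow> i < zlen Y \<Longrightarrow> hat fs i \<le> k \<Longrightarrow> k \<le> hat fs (Suc i) \<Longrightarrow>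
    right_leg D X Y fs fr fsg i k = left_leg D X Y fs fr fsg i k"
  unfolding legs_agree_def by blast

locale zig_map =
  fixes D :: "'c zt cat" and X Y :: "'c zt" and fs :: "nat list" and fr fsg :: "'c zt list"
  assumes dom_zobj: "is_zobj D X" and cod_zobj: "is_zobj D Y"
    and fs: "delta_arr (zlen X) (zlen Y) fs"
    and fr_length: "length fr = Suc (zlen Y)" and fsg_length: "length fsg = zlen X"
    and fr: "\<forall>i\<le>zlen Y. fr ! i \<in> Hom D \<and> Dom D (fr ! i) = zreg X ! hat fs i \<and>
      Cod D (fr ! i) = zreg Y ! i"
    and fsg: "\<forall>j<zlen X. fsg ! j \<in> Hom D \<and> Dom D (fsg ! j) = zsing X ! j \<and>
      Cod D (fsg ! j) = zsing Y ! (fs ! j)"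
begin

lemma fs_length [simp]: "length fs = zlen X"
  and fs_sorted: "sorted fs"
  and fs_less [simp]: "j < zlen X \<Longrightarrow> fs ! j < zlen Y"
  and hat_fs_le [simp]: "hat fs i \<le> zlen X"
  using fs hat_le[of fs i] by (auto simp: delta_arr_def)

lemma fr_hom [simp]: "i \<le> zlen Y \<Longrightarrow> fr ! i \<in> Hom D"
  and fr_dom [simp]: "i \<le> zlen Y \<Longrightarrow> Dom D (fr ! i) = zreg X ! hat fs i"
  and fr_cod [simp]: "i \<le> zlen Y \<Longrightarrow> Cod D (fr ! i) = zreg Y ! i"
  and fsg_hom [simp]: "j < zlen X \<Longrightarrow> fsg ! j \<in> Hom D"
  and fsg_dom [simp]: "j < zlen X \<Longrightarrow> Dom D (fsg ! j) = zsing X ! j"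
  and fsg_cod [simp]: "j < zlen X \<Longrightarrow> Cod D (fsg ! j) = zsing Y ! (fs ! j)"
  using fr fsg by auto

lemmas [simp] = fr_length fsg_length zobj_simps[OF dom_zobj] zobj_simps[OF cod_zobj]

lemma zig_cond_iff_legs:
  "zig_cond D X Y fs fr fsg i \<longleftrightarrow> (\<forall>k. hat fs i \<le> k \<longrightarrow> k \<le> hat fs (Suc i) \<longrightarrow>
     right_leg D X Y fs fr fsg i k = left_leg D X Y fs fr fsg i k)"
proof -
  define a b where "a = hat fs i" and "b = hat fs (Suc i)"
  have fibre: "{j. j < length fs \<and> fs ! j = i} = {a..<b}"
    unfolding a_def b_def using fibre_eq_hat[OF fs_sorted] .
  have "a \<le> b" unfolding a_def b_def using hat_mono[OF fs_sorted] by simp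
  then consider "a < b" | "a = b" by linarith
  then show ?thesis
  proof cases
    case 1
    then have "Min {a..<b} = a" "Max {a..<b} = b - 1" by (auto intro!: Min_eqI Max_eqI)
    then show ?thesis
      using chain_conds_iff_legs[OF 1, of "\<lambda>k. Comp D (fsg ! k) (zfw X ! k)"
          "Comp D (zfw Y ! i) (fr ! i)" "\<lambda>j. Comp D (fsg ! j) (zbw X ! j)"
          "Comp D (zbw Y ! i) (fr ! Suc i)"] 1
      unfolding zig_cond_def Let_def fibre right_leg_def left_leg_def a_def[symmetric] b_def[symmetric]
      by simp
  next
    case 2
    then show ?thesis
      unfolding zig_cond_def Let_def fibre right_leg_def left_leg_def a_def[symmetric] b_def[symmetric]
      by (auto simp: le_antisym)
  qed
qed

lemma zig_conds_iff_legs_agree: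
  "(\<forall>i<zlen Y. zig_cond D X Y fs fr fsg i) \<longleftrightarrow> legs_agree D X Y fs fr fsg"
  unfolding legs_agree_def zig_cond_iff_legs ..

end

lemma is_zarr_iff:
  "is_zarr D f \<longleftrightarrow> (\<exists>X Y fs fr fsg. f = ZArr X Y fs fr fsg \<and> zig_map D X Y fs fr fsg \<and>
     legs_agree D X Y fs fr fsg)"
proof -
  have "is_zarr D f \<longleftrightarrow> (\<exists>X Y fs fr fsg. f = ZArr X Y fs fr fsg \<and> zig_map D X Y fs fr fsg \<and>
      (\<forall>i<zlen Y. zig_cond D X Y fs fr fsg i))"
    unfolding is_zarr_def zig_map_def conj_assoc ..
  then show ?thesis by (simp add: zig_map.zig_conds_iff_legs_agree cong: conj_cong)
qed

lemma
  assumes "is_zarr D f"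
  shows zarr_eq_ZArr: "f = ZArr (adom f) (acod f) (amap f) (areg f) (asing f)"
    and zarr_zig_map: "zig_map D (adom f) (acod f) (amap f) (areg f) (asing f)"
    and zarr_legs_agree: "legs_agree D (adom f) (acod f) (amap f) (areg f) (asing f)"
  using assms unfolding is_zarr_iff by auto

lemma is_zarr_ZArrI:
  "zig_map D X Y fs fr fsg \<Longrightarrow> legs_agree D X Y fs fr fsg \<Longrightarrow> is_zarr D (ZArr X Y fs fr fsg)"
  unfolding is_zarr_iff by blast

locale zig_composable = f: zig_map D X Y fs fr fsg + g: zig_map D Y W gs gr gsg
  for D :: "'c zt cat" and X Y W :: "'c zt" and fs gs :: "nat list" and fr fsg gr gsg :: "'c zt list" +
  assumes cat: "category D"
    and f_legs: "legs_agree D X Y fs fr fsg"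
    and g_legs: "legs_agree D Y W gs gr gsg"
begin

definition hr :: "'c zt list" where
  "hr = map (\<lambda>i. Comp D (gr ! i) (fr ! hat gs i)) [0..<Suc (zlen W)]"

definition hsg :: "'c zt list" where
  "hsg = map (\<lambda>j. Comp D (gsg ! (fs ! j)) (fsg ! j)) [0..<zlen X]"

lemma hr_nth [simp]: "i \<le> zlen W \<Longrightarrow> hr ! i = Comp D (gr ! i) (fr ! hat gs i)"
  and hsg_nth [simp]: "j < zlen X \<Longrightarrow> hsg ! j = Comp D (gsg ! (fs ! j)) (fsg ! j)"
  unfolding hr_def hsg_def by (simp_all add: nth_map_upt less_Suc_eq_le del: upt_Suc)

lemma hat_comp_fs_gs [simp]: "hat (delta_comp gs fs) i = hat fs (hat gs i)"
  using hat_comp[OF f.fs g.fs] .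

lemmas comp_simps = cat_comp_simps[OF cat] cat_assoc[OF cat]

lemma comp_zig_map: "zig_map D X W (delta_comp gs fs) hr hsg"
  unfolding zig_map_def
proof (intro conjI allI impI)
  show "delta_arr (zlen X) (zlen W) (delta_comp gs fs)" using f.fs g.fs by (rule delta_arr_comp)
  show "length hr = Suc (zlen W)" "length hsg = zlen X" by (simp_all add: hr_def hsg_def)
qed (use f.dom_zobj g.cod_zobj in \<open>auto simp: cat_comp_simps[OF cat]\<close>)

definition through_reg :: "nat \<Rightarrow> nat \<Rightarrow> 'c zt" where
  "through_reg i p = Comp D (right_leg D Y W gs gr gsg i p) (fr ! p)"

lemma through_reg_eq_left_leg:
  "i < zlen W \<Longrightarrow> hat gs i \<le> p \<Longrightarrow> p \<le> hat gs (Suc i) \<Longrightarrow>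
    through_reg i p = Comp D (left_leg D Y W gs gr gsg i p) (fr ! p)"
  using g_legs unfolding legs_agree_def through_reg_def by simp

lemma
  assumes i: "i < zlen W" and p: "hat gs i \<le> p" "p < hat gs (Suc i)"
  shows through_reg_via_left_leg:
      "Comp D (gsg ! p) (left_leg D X Y fs fr fsg p (hat fs p)) = through_reg i p"
    and through_reg_via_right_leg:
      "Comp D (gsg ! p) (right_leg D X Y fs fr fsg p (hat fs (Suc p))) = through_reg i (Suc p)"
proof -
  have "p < zlen Y" using p g.hat_fs_le[of "Suc i"] by linarith
  then show "Comp D (gsg ! p) (left_leg D X Y fs fr fsg p (hat fs p)) = through_reg i p"
    using p by (simp add: left_leg_def right_leg_def through_reg_def comp_simps)
  have "through_reg i (Suc p) = Comp D (left_leg D Y W gs gr gsg i (Suc p)) (fr ! Suc p)"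
    using i p by (simp add: through_reg_eq_left_leg)
  then show "Comp D (gsg ! p) (right_leg D X Y fs fr fsg p (hat fs (Suc p))) = through_reg i (Suc p)"
    using p \<open>p < zlen Y\<close> by (simp add: left_leg_def right_leg_def comp_simps)
qed

lemma through_reg_chain:
  assumes i: "i < zlen W" and p: "hat gs i \<le> p" and "p \<le> q"
  shows "q \<le> hat gs (Suc i) \<Longrightarrow> hat fs p = hat fs q \<Longrightarrow> through_reg i p = through_reg i q"
  using \<open>p \<le> q\<close>
proof (induction q rule: dec_induct)
  case (step r)
  have hat_r: "hat fs r = hat fs p" "hat fs (Suc r) = hat fs p"
    using step hat_mono[OF f.fs_sorted, of p r] hat_mono[OF f.fs_sorted, of r "Suc r"] by auto
  have "r < zlen Y" using step g.hat_fs_le[of "Suc i"] by linarith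
  then have "right_leg D X Y fs fr fsg r (hat fs r) = left_leg D X Y fs fr fsg r (hat fs r)"
    using f_legs hat_r unfolding legs_agree_def by simp
  then have legs: "left_leg D X Y fs fr fsg r (hat fs r) = right_leg D X Y fs fr fsg r (hat fs (Suc r))"
    using hat_r by simp
  have r: "hat gs i \<le> r" "r < hat gs (Suc i)" using step p by linarith+
  have "through_reg i p = through_reg i r" using step.IH r hat_r(1) by simp
  also have "\<dots> = Comp D (gsg ! r) (left_leg D X Y fs fr fsg r (hat fs r))"
    using through_reg_via_left_leg[OF i r] ..
  also have "\<dots> = through_reg i (Suc r)"
    unfolding legs using through_reg_via_right_leg[OF i r] .
  finally show ?case .
qed simp


lemma comp_right_leg_through:
  assumes i: "i < zlen W" and p: "hat gs i \<le> p" "p \<le> hat gs (Suc i)"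
  shows "right_leg D X W (delta_comp gs fs) hr hsg i (hat fs p) = through_reg i p"
proof (cases "hat fs p < hat fs (hat gs (Suc i))")
  case True
  define k q where "k = hat fs p" and "q = fs ! k"
  have k: "k < zlen X" "k < hat fs (hat gs (Suc i))"
    using True f.hat_fs_le[of "hat gs (Suc i)"] unfolding k_def by linarith+
  have "hat fs p \<le> k \<longleftrightarrow> p \<le> q" "hat fs (hat gs (Suc i)) \<le> k \<longleftrightarrow> hat gs (Suc i) \<le> q"
    using hat_galois[OF f.fs_sorted, of k] k(1) unfolding q_def by simp_all
  then have "p \<le> q" "q < hat gs (Suc i)" using k k_def by auto
  moreover have "hat fs q \<le> k" "k < hat fs (Suc q)"
    using nth_eq_iff_hat[OF f.fs_sorted, of k q] k q_def by simp_all
  ultimately have hat_q: "hat fs q = k" using hat_mono[OF f.fs_sorted, of p q] k_def by simp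
  have "q < zlen Y" using \<open>q < hat gs (Suc i)\<close> g.hat_fs_le[of "Suc i"] by linarith
  have "right_leg D X W (delta_comp gs fs) hr hsg i k = Comp D (gsg ! q) (right_leg D X Y fs fr fsg q k)"
    using k \<open>k < hat fs (Suc q)\<close> by (simp add: right_leg_def q_def comp_simps)
  also have "\<dots> = Comp D (gsg ! q) (left_leg D X Y fs fr fsg q (hat fs q))"
    using legs_agreeD[OF f_legs \<open>q < zlen Y\<close>] \<open>k < hat fs (Suc q)\<close> hat_q by simp
  also have "\<dots> = through_reg i q"
    using through_reg_via_left_leg i p \<open>p \<le> q\<close> \<open>q < hat gs (Suc i)\<close> by simp
  also have "\<dots> = through_reg i p"
    using through_reg_chain[OF i p(1) \<open>p \<le> q\<close>] \<open>q < hat gs (Suc i)\<close> hat_q k_def by simp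
  finally show ?thesis unfolding k_def .
next
  case False
  then have hat_p: "hat fs p = hat fs (hat gs (Suc i))" using hat_mono[OF f.fs_sorted p(2)] by simp
  have "right_leg D X W (delta_comp gs fs) hr hsg i (hat fs p) = Comp D (zbw W ! i) (hr ! Suc i)"
    using False by (simp add: right_leg_def)
  also have "\<dots> = through_reg i (hat gs (Suc i))"
    using i by (simp add: through_reg_def right_leg_def comp_simps)
  also have "\<dots> = through_reg i p"
    using through_reg_chain[OF i p] hat_p by simp
  finally show ?thesis .
qed

lemma comp_left_leg_through:
  assumes i: "i < zlen W" and p: "hat gs i \<le> p" "p \<le> hat gs (Suc i)"
  shows "left_leg D X W (delta_comp gs fs) hr hsg i (hat fs p) = through_reg i p"
proof (cases "hat fs (hat gs i) < hat fs p")
  case True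
  define k q where "k = hat fs p" and "q = fs ! (k - 1)"
  have k: "0 < k" "k - 1 < zlen X" "hat fs (hat gs i) \<le> k - 1"
    using True f.hat_fs_le[of p] unfolding k_def by linarith+
  have "hat fs p \<le> k - 1 \<longleftrightarrow> p \<le> q" "hat fs (hat gs i) \<le> k - 1 \<longleftrightarrow> hat gs i \<le> q"
    using hat_galois[OF f.fs_sorted, of "k - 1"] k(2) unfolding q_def by simp_all
  then have "q < p" "hat gs i \<le> q" using k k_def by auto
  moreover have "hat fs q < k" "k \<le> hat fs (Suc q)"
    using nth_eq_iff_hat[OF f.fs_sorted, of "k - 1" q] k q_def by auto
  ultimately have hat_Suc_q: "hat fs (Suc q) = k"
    using hat_mono[OF f.fs_sorted, of "Suc q" p] k_def by simp
  have q: "q < hat gs (Suc i)" "q < zlen Y"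
    using \<open>q < p\<close> p g.hat_fs_le[of "Suc i"] by linarith+
  have "left_leg D X W (delta_comp gs fs) hr hsg i k = Comp D (gsg ! q) (left_leg D X Y fs fr fsg q k)"
    using True k \<open>hat fs q < k\<close> by (simp add: left_leg_def q_def k_def comp_simps)
  also have "\<dots> = Comp D (gsg ! q) (right_leg D X Y fs fr fsg q (hat fs (Suc q)))"
    using legs_agreeD[OF f_legs q(2)] \<open>hat fs q < k\<close> hat_Suc_q by simp
  also have "\<dots> = through_reg i (Suc q)"
    using through_reg_via_right_leg i \<open>hat gs i \<le> q\<close> q by simp
  also have "\<dots> = through_reg i p"
    using through_reg_chain[of i "Suc q" p] i \<open>hat gs i \<le> q\<close> \<open>q < p\<close> p hat_Suc_q k_def by simp
  finally show ?thesis unfolding k_def .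
next
  case False
  then have hat_p: "hat fs p = hat fs (hat gs i)" using hat_mono[OF f.fs_sorted p(1)] by simp
  have "left_leg D X W (delta_comp gs fs) hr hsg i (hat fs p) = Comp D (zfw W ! i) (hr ! i)"
    using False by (simp add: left_leg_def)
  also have "\<dots> = through_reg i (hat gs i)"
    using i p by (simp add: through_reg_eq_left_leg left_leg_def comp_simps)
  also have "\<dots> = through_reg i p"
    using through_reg_chain[OF i order.refl p(1)] p hat_p by simp
  finally show ?thesis .
qed

text \<open>If the regular height \<open>k\<close> of \<open>X\<close> is \<open>hat fs p\<close> for a regular height \<open>p\<close> of \<open>Y\<close> over
  \<open>W(s\<^sub>i)\<close>, both legs of the composite equal \<open>through_reg i p\<close>; otherwise \<open>k\<close> lies strictly
  inside a single fibre of \<open>fs\<close> and the legs of \<open>f\<close> suffice.\<close>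

lemma comp_legs_agree: "legs_agree D X W (delta_comp gs fs) hr hsg"
  unfolding legs_agree_def
proof (intro allI impI)
  fix i k assume i: "i < zlen W"
    and k: "hat (delta_comp gs fs) i \<le> k" "k \<le> hat (delta_comp gs fs) (Suc i)"
  show "right_leg D X W (delta_comp gs fs) hr hsg i k = left_leg D X W (delta_comp gs fs) hr hsg i k"
  proof (cases "\<exists>p. hat gs i \<le> p \<and> p \<le> hat gs (Suc i) \<and> hat fs p = k")
    case True
    then show ?thesis using comp_right_leg_through comp_left_leg_through i by auto
  next
    case False
    have "hat gs i \<le> hat gs (Suc i)" using hat_mono[OF g.fs_sorted] by simp
    then have k': "hat fs (hat gs i) < k" "k < hat fs (hat gs (Suc i))"
      using False k by (auto simp: le_less)
    define p where "p = fs ! k"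
    have kX: "k < zlen X" using k' f.hat_fs_le[of "hat gs (Suc i)"] by linarith
    have "hat fs (hat gs i) \<le> k \<longleftrightarrow> hat gs i \<le> p" "hat fs (hat gs (Suc i)) \<le> k \<longleftrightarrow> hat gs (Suc i) \<le> p"
      using hat_galois[OF f.fs_sorted, of k] kX unfolding p_def by simp_all
    then have p: "hat gs i \<le> p" "p < hat gs (Suc i)" using k' by auto
    have "hat fs p \<le> k" "k < hat fs (Suc p)"
      using nth_eq_iff_hat[OF f.fs_sorted, of k p] kX p_def by simp_all
    moreover have "hat fs p \<noteq> k" using False p by auto
    ultimately have "fs ! (k - 1) = p" "hat fs p < k"
      using nth_eq_iff_hat[OF f.fs_sorted, of "k - 1" p] kX by auto
    have "p < zlen Y" using p g.hat_fs_le[of "Suc i"] by linarith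
    have "right_leg D X W (delta_comp gs fs) hr hsg i k = Comp D (gsg ! p) (right_leg D X Y fs fr fsg p k)"
      using k' kX \<open>k < hat fs (Suc p)\<close> by (simp add: right_leg_def p_def comp_simps)
    also have "\<dots> = Comp D (gsg ! p) (left_leg D X Y fs fr fsg p k)"
      using legs_agreeD[OF f_legs \<open>p < zlen Y\<close>] \<open>hat fs p \<le> k\<close> \<open>k < hat fs (Suc p)\<close> by simp
    also have "\<dots> = left_leg D X W (delta_comp gs fs) hr hsg i k"
      using k' kX \<open>hat fs p < k\<close> \<open>fs ! (k - 1) = p\<close> \<open>p < zlen Y\<close>
      by (simp add: left_leg_def comp_simps less_imp_diff_less)
    finally show ?thesis .
  qed
qed

end

lemma zcomp_sel [simp]:
  "adom (zcomp D g f) = adom f" "acod (zcomp D g f) = acod g"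
  "amap (zcomp D g f) = delta_comp (amap g) (amap f)"
  "length (areg (zcomp D g f)) = length (areg g)" "length (asing (zcomp D g f)) = length (amap f)"
  by (simp_all add: zcomp_def)

lemma zcomp_nth [simp]:
  "i < length (areg g) \<Longrightarrow> areg (zcomp D g f) ! i = Comp D (areg g ! i) (areg f ! hat (amap g) i)"
  "j < length (amap f) \<Longrightarrow> asing (zcomp D g f) ! j = Comp D (asing g ! (amap f ! j)) (asing f ! j)"
  by (simp_all add: zcomp_def)

lemma zcomp_eq_ZArr: "zcomp D g f = ZArr (adom f) (acod g) (delta_comp (amap g) (amap f))
    (areg (zcomp D g f)) (asing (zcomp D g f))"
  by (simp add: zcomp_def)

lemma Z_comp_arr:
  assumes D: "category D" and f: "is_zarr D f" and g: "is_zarr D g" and fg: "acod f = adom g"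
  shows "is_zarr D (zcomp D g f)"
proof -
  interpret zig_composable D "adom f" "acod f" "acod g" "amap f" "amap g" "areg f" "asing f"
    "areg g" "asing g"
    using D zarr_zig_map[OF f] zarr_zig_map[OF g] zarr_legs_agree[OF f] zarr_legs_agree[OF g] fg
    by (simp add: zig_composable_def zig_composable_axioms_def)
  have "areg (zcomp D g f) = hr" "asing (zcomp D g f) = hsg"
    unfolding hr_def hsg_def by (simp_all add: zcomp_def)
  then show ?thesis
    using is_zarr_ZArrI[OF comp_zig_map comp_legs_agree] by (subst zcomp_eq_ZArr) simp
qed

lemma Z_id_arr:
  assumes D: "category D" and X: "is_zobj D X"
  shows "is_zarr D (zid D X)"
  unfolding zid_def
proof (rule is_zarr_ZArrI)
  note zobj_simps[OF X, simp] cat_id_simps[OF D, simp] hat_id[simp]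
  show "zig_map D X X [0..<zlen X] (map (Ident D) (zreg X)) (map (Ident D) (zsing X))"
    unfolding zig_map_def using X by (auto simp: delta_arr_def zlen_def[symmetric])
  show "legs_agree D X X [0..<zlen X] (map (Ident D) (zreg X)) (map (Ident D) (zsing X))"
    unfolding legs_agree_def right_leg_def left_leg_def
    by (auto simp: le_Suc_eq zlen_def[symmetric])
qed

lemma Z_assoc:
  assumes D: "category D" and f: "is_zarr D f" and g: "is_zarr D g" and h: "is_zarr D h"
    and fg: "acod f = adom g" and gh: "acod g = adom h"
  shows "zcomp D h (zcomp D g f) = zcomp D (zcomp D h g) f"
proof -
  interpret f: zig_map D "adom f" "acod f" "amap f" "areg f" "asing f"
    using zarr_zig_map[OF f] .
  interpret g: zig_map D "acod f" "acod g" "amap g" "areg g" "asing g"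
    using zarr_zig_map[OF g] fg by simp
  interpret h: zig_map D "acod g" "acod h" "amap h" "areg h" "asing h"
    using zarr_zig_map[OF h] gh by simp
  have "delta_comp (amap h) (delta_comp (amap g) (amap f)) =
      delta_comp (delta_comp (amap h) (amap g)) (amap f)"
    by (rule delta_comp_assoc) simp
  moreover have "areg (zcomp D h (zcomp D g f)) = areg (zcomp D (zcomp D h g) f)"
    by (rule nth_equalityI)
      (simp_all add: hat_comp[OF g.fs h.fs] cat_assoc[OF D] cat_comp_simps[OF D] less_Suc_eq_le)
  moreover have "asing (zcomp D h (zcomp D g f)) = asing (zcomp D (zcomp D h g) f)"
    by (rule nth_equalityI) (simp_all add: cat_assoc[OF D] cat_comp_simps[OF D])
  ultimately show ?thesis by (subst (1 2) zcomp_eq_ZArr) simp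
qed

lemma Z_id_left:
  assumes D: "category D" and f: "is_zarr D f"
  shows "zcomp D (zid D (acod f)) f = f"
proof -
  interpret zig_map D "adom f" "acod f" "amap f" "areg f" "asing f" using zarr_zig_map[OF f] .
  have "delta_comp [0..<zlen (acod f)] (amap f) = amap f" using fs by (rule delta_comp_id_left)
  moreover have "areg (zcomp D (zid D (acod f)) f) = areg f"
    by (rule nth_equalityI) (simp_all add: zid_def hat_id cat_id_left[OF D] nth_map_upt)
  moreover have "asing (zcomp D (zid D (acod f)) f) = asing f"
    by (rule nth_equalityI) (simp_all add: zid_def cat_id_left[OF D] zlen_def[symmetric])
  ultimately show ?thesis by (subst zcomp_eq_ZArr, subst (4) zarr_eq_ZArr[OF f]) (simp add: zid_def)
qed

lemma Z_id_right:
  assumes D: "category D" and f: "is_zarr D f"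
  shows "zcomp D f (zid D (adom f)) = f"
proof -
  interpret zig_map D "adom f" "acod f" "amap f" "areg f" "asing f" using zarr_zig_map[OF f] .
  have "delta_comp (amap f) [0..<zlen (adom f)] = amap f" by (simp add: delta_comp_id_right)
  moreover have "areg (zcomp D f (zid D (adom f))) = areg f"
    by (rule nth_equalityI) (simp_all add: zid_def cat_id_right[OF D] less_Suc_eq_le)
  moreover have "asing (zcomp D f (zid D (adom f))) = asing f"
    by (rule nth_equalityI) (simp_all add: zid_def cat_id_right[OF D] zlen_def[symmetric])
  ultimately show ?thesis by (subst zcomp_eq_ZArr, subst (4) zarr_eq_ZArr[OF f]) (simp add: zid_def)
qed

lemma Z_simps [simp]:
  "Hom (Z D) = {f. is_zarr D f}" "Ob (Z D) = {X. is_zobj D X}" "Dom (Z D) = adom" "Cod (Z D) = acod"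
  "Comp (Z D) = zcomp D" "Ident (Z D) = zid D"
  by (simp_all add: Z_def)

lemma Z_category: "category D \<Longrightarrow> category (Z D)"
  unfolding category_def [of "Z D"]
  using zarr_zig_map[THEN zig_map.dom_zobj] zarr_zig_map[THEN zig_map.cod_zobj]
    Z_id_arr Z_comp_arr Z_assoc Z_id_left Z_id_right
  by (auto simp: zid_def)

lemma lift_category: "category C \<Longrightarrow> category (lift C)"
  unfolding category_def lift_def by (auto simp: image_iff)

lemma Zit_Suc: "Zit (Suc k) C = Z (Zit k C)"
  unfolding Zit_def by simp

lemma Zit_category: "category C \<Longrightarrow> category (Zit n C)"
  by (induction n) (simp_all add: Zit_Suc Z_category, simp add: Zit_def lift_category)

lemma Z_monicI:
  assumes f: "is_zarr D f"
    and amap_mono: "delta_mono (zlen (adom f)) (zlen (acod f)) (amap f)"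
    and asing_monic: "\<And>j. j < zlen (adom f) \<Longrightarrow> monic D (asing f ! j)"
    and areg_monic: "\<And>k. k \<le> zlen (adom f) \<Longrightarrow>
      \<exists>i\<le>zlen (acod f). hat (amap f) i = k \<and> monic D (areg f ! i)"
  shows "monic (Z D) f"
  unfolding monic_def Z_simps
proof (intro conjI allI impI)
  interpret zig_map D "adom f" "acod f" "amap f" "areg f" "asing f" using zarr_zig_map[OF f] .
  fix a b assume "a \<in> {f. is_zarr D f}" "b \<in> {f. is_zarr D f}"
    and ab: "adom a = adom b" "acod a = adom f" "acod b = adom f"
    and eq: "zcomp D f a = zcomp D f b"
  then have a: "is_zarr D a" and b: "is_zarr D b" by auto
  interpret a: zig_map D "adom a" "adom f" "amap a" "areg a" "asing a"
    using zarr_zig_map[OF a] ab by simp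
  interpret b: zig_map D "adom a" "adom f" "amap b" "areg b" "asing b"
    using zarr_zig_map[OF b] ab by simp
  have amap: "amap a = amap b"
    using amap_mono a.fs b.fs arg_cong[OF eq, of amap] unfolding delta_mono_def by simp
  have asing: "asing a = asing b"
  proof (rule nth_equalityI)
    fix j assume "j < length (asing a)"
    then have j: "j < zlen (adom a)" by simp
    have "Comp D (asing f ! (amap a ! j)) (asing a ! j) = Comp D (asing f ! (amap a ! j)) (asing b ! j)"
      using arg_cong[OF eq, of "\<lambda>h. asing h ! j"] j amap by simp
    then show "asing a ! j = asing b ! j"
      by (rule monicD[OF asing_monic[of "amap a ! j"], rotated -1]) (use j amap in simp_all)
  qed simp
  have areg: "areg a = areg b"
  proof (rule nth_equalityI)
    fix k assume "k < length (areg a)"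
    then have k: "k \<le> zlen (adom f)" by simp
    then obtain i where i: "i \<le> zlen (acod f)" "hat (amap f) i = k" "monic D (areg f ! i)"
      using areg_monic by blast
    have "Comp D (areg f ! i) (areg a ! k) = Comp D (areg f ! i) (areg b ! k)"
      using arg_cong[OF eq, of "\<lambda>h. areg h ! i"] i by (simp add: less_Suc_eq_le)
    then show "areg a ! k = areg b ! k" by (rule monicD[OF i(3), rotated -1]) (use i k amap in simp_all)
  qed simp
  show "a = b"
    by (subst zarr_eq_ZArr[OF a], subst zarr_eq_ZArr[OF b]) (simp add: ab amap asing areg)
qed (use f in simp)

lemma parallel_degen_monic:
  assumes f: "f \<in> parallel_degen D S" and S: "\<And>s. s \<in> S \<Longrightarrow> monic D s"
  shows "monic (Z D) f"
proof -
  have zarr: "is_zarr D f" and vert: "vertical f"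
    and slices: "set (areg f) \<subseteq> S" "set (asing f) \<subseteq> S"
    using f unfolding parallel_degen_def by auto
  interpret zig_map D "adom f" "acod f" "amap f" "areg f" "asing f" using zarr_zig_map[OF zarr] .
  have len: "zlen (acod f) = zlen (adom f)" and id: "amap f = [0..<zlen (adom f)]"
    using vert unfolding vertical_def by auto
  show ?thesis
  proof (rule Z_monicI[OF zarr])
    show "delta_mono (zlen (adom f)) (zlen (acod f)) (amap f)" using delta_mono_id len id by simp
    show "monic D (asing f ! j)" if "j < zlen (adom f)" for j
    proof -
      have "asing f ! j \<in> set (asing f)" using that by simp
      then show ?thesis using slices S by blast
    qed
    show "\<exists>i\<le>zlen (acod f). hat (amap f) i = k \<and> monic D (areg f ! i)" if "k \<le> zlen (adom f)" for k
    proof -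
      have "areg f ! k \<in> set (areg f)" using that len by (simp add: less_Suc_eq_le)
      then have "monic D (areg f ! k)" using slices S by blast
      then show ?thesis using that len id hat_id by (auto intro!: exI[of _ k])
    qed
  qed
qed

text \<open>\<open>pad_zobj D \<delta> m X\<close> is \<open>X\<close> with its singular heights moved to the heights \<open>\<delta>\<close> and identity
  cospans at the remaining heights; \<open>pad_zarr\<close> is the map \<open>X \<rightarrow> pad_zobj D \<delta> m X\<close> over \<open>\<delta>\<close>
  with identity slices.\<close>

definition pad_zobj :: "'c zt cat \<Rightarrow> nat list \<Rightarrow> nat \<Rightarrow> 'c zt \<Rightarrow> 'c zt" where
  "pad_zobj D \<delta> m X = ZObj
     (map (\<lambda>i. zreg X ! hat \<delta> i) [0..<Suc m])
     (map (\<lambda>i. if i \<in> set \<delta> then zsing X ! hat \<delta> i else zreg X ! hat \<delta> i) [0..<m])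
     (map (\<lambda>i. if i \<in> set \<delta> then zfw X ! hat \<delta> i else Ident D (zreg X ! hat \<delta> i)) [0..<m])
     (map (\<lambda>i. if i \<in> set \<delta> then zbw X ! hat \<delta> i else Ident D (zreg X ! hat \<delta> i)) [0..<m])"

definition pad_zarr :: "'c zt cat \<Rightarrow> nat list \<Rightarrow> nat \<Rightarrow> 'c zt \<Rightarrow> 'c zt" where
  "pad_zarr D \<delta> m X = ZArr X (pad_zobj D \<delta> m X) \<delta>
     (map (\<lambda>i. Ident D (zreg X ! hat \<delta> i)) [0..<Suc m]) (map (Ident D) (zsing X))"

lemma pad_zobj_sel [simp]:
  "zlen (pad_zobj D \<delta> m X) = m"
  "i \<le> m \<Longrightarrow> zreg (pad_zobj D \<delta> m X) ! i = zreg X ! hat \<delta> i"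
  "i < m \<Longrightarrow> zsing (pad_zobj D \<delta> m X) ! i =
     (if i \<in> set \<delta> then zsing X ! hat \<delta> i else zreg X ! hat \<delta> i)"
  "i < m \<Longrightarrow> zfw (pad_zobj D \<delta> m X) ! i =
     (if i \<in> set \<delta> then zfw X ! hat \<delta> i else Ident D (zreg X ! hat \<delta> i))"
  "i < m \<Longrightarrow> zbw (pad_zobj D \<delta> m X) ! i =
     (if i \<in> set \<delta> then zbw X ! hat \<delta> i else Ident D (zreg X ! hat \<delta> i))"
  by (simp_all add: pad_zobj_def zlen_def nth_map_upt less_Suc_eq_le del: upt_Suc)

context
  fixes D :: "'c zt cat" and X :: "'c zt" and \<delta> :: "nat list" and m :: nat
  assumes D: "category D" and X: "is_zobj D X"
    and \<delta>: "delta_arr (zlen X) m \<delta>" and distinct: "distinct \<delta>"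
begin

private lemma \<delta>_facts:
  "length \<delta> = zlen X" "sorted \<delta>" "\<And>j. j < zlen X \<Longrightarrow> \<delta> ! j < m" "\<And>i. hat \<delta> i \<le> zlen X"
  using \<delta> hat_le[of \<delta>] by (auto simp: delta_arr_def)

private lemmas pad_simps = \<delta>_facts zobj_simps[OF X] cat_id_simps[OF D]
  hat_in_set[OF \<delta>_facts(2) distinct, unfolded \<delta>_facts(1)] hat_Suc_notin[OF \<delta>_facts(2)]
  hat_nth[OF \<delta>_facts(2) distinct, unfolded \<delta>_facts(1)]

lemma pad_zobj_is_zobj: "is_zobj D (pad_zobj D \<delta> m X)"
  unfolding pad_zobj_def
  by (rule is_zobjI) (auto simp: pad_simps less_Suc_eq_le simp del: upt_Suc)

lemma pad_zarr_is_zarr: "is_zarr D (pad_zarr D \<delta> m X)"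
  unfolding pad_zarr_def
proof (rule is_zarr_ZArrI)
  note pad_simps [simp]
  show "zig_map D X (pad_zobj D \<delta> m X) \<delta> (map (\<lambda>i. Ident D (zreg X ! hat \<delta> i)) [0..<Suc m])
      (map (Ident D) (zsing X))"
    unfolding zig_map_def using X pad_zobj_is_zobj \<delta>
    by (auto simp: zlen_def[symmetric] nth_map_upt less_Suc_eq_le simp del: upt_Suc)
  show "legs_agree D X (pad_zobj D \<delta> m X) \<delta> (map (\<lambda>i. Ident D (zreg X ! hat \<delta> i)) [0..<Suc m])
      (map (Ident D) (zsing X))"
    unfolding legs_agree_def right_leg_def left_leg_def
    by (auto simp: nth_map_upt less_Suc_eq_le le_Suc_eq zlen_def[symmetric] simp del: upt_Suc
        split: if_splits)
qed

end

lemma simple_degen_slices_monic: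
  assumes D: "category D" and f: "f \<in> simple_degen D"
  shows "\<forall>j<zlen (adom f). monic D (asing f ! j)" and "\<forall>i\<le>zlen (acod f). monic D (areg f ! i)"
proof -
  have cc: "cocartesian D f" and distinct: "distinct (amap f)"
    using f delta_mono_imp_distinct unfolding simple_degen_def by auto
  then have zarr: "is_zarr D f" unfolding cocartesian_def by simp
  interpret zig_map D "adom f" "acod f" "amap f" "areg f" "asing f" using zarr_zig_map[OF zarr] .
  define m where "m = zlen (acod f)"
  define p where "p = pad_zarr D (amap f) m (adom f)"
  have p: "is_zarr D p" unfolding p_def m_def using pad_zarr_is_zarr[OF D dom_zobj fs distinct] .
  have p_sel: "adom p = adom f" "zlen (acod p) = m" "amap p = amap f"
    by (simp_all add: p_def pad_zarr_def)
  have "delta_arr m (zlen (acod p)) [0..<m]" "delta_comp [0..<m] (amap f) = amap p"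
    using p_sel delta_comp_id_left[OF fs] by (simp_all add: delta_arr_def m_def)
  then have "\<exists>!v. v \<in> Hom (Z D) \<and> adom v = acod f \<and> acod v = acod p \<and> zcomp D v f = p \<and> amap v = [0..<m]"
    using cc p p_sel unfolding cocartesian_def m_def by simp
  then obtain v where v: "is_zarr D v" "adom v = acod f" "amap v = [0..<m]" "zcomp D v f = p"
    and "acod v = acod p"
    by auto
  then have "zlen (acod v) = m" using p_sel by simp
  interpret v: zig_map D "acod f" "acod v" "[0..<m]" "areg v" "asing v"
    using zarr_zig_map[OF v(1)] v by simp
  show "\<forall>j<zlen (adom f). monic D (asing f ! j)"
  proof (intro allI impI)
    fix j assume j: "j < zlen (adom f)"
    have "Comp D (asing v ! (amap f ! j)) (asing f ! j) = Ident D (zsing (adom f) ! j)"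
      using arg_cong[OF v(4), of "\<lambda>h. asing h ! j"] j by (simp add: p_def pad_zarr_def zlen_def)
    then show "monic D (asing f ! j)"
      using j m_def by (intro split_mono_imp_monic[OF D, of _ "asing v ! (amap f ! j)"]) simp_all
  qed
  show "\<forall>i\<le>zlen (acod f). monic D (areg f ! i)"
  proof (intro allI impI)
    fix i assume i: "i \<le> zlen (acod f)"
    have "Comp D (areg v ! i) (areg f ! i) = Ident D (zreg (adom f) ! hat (amap f) i)"
      using arg_cong[OF v(4), of "\<lambda>h. areg h ! i"] i m_def v(3) \<open>zlen (acod v) = m\<close>
      by (simp add: p_def pad_zarr_def hat_id nth_map_upt less_Suc_eq_le del: upt_Suc)
    then show "monic D (areg f ! i)"
      using i m_def hat_id[of i m] \<open>zlen (acod v) = m\<close>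
      by (intro split_mono_imp_monic[OF D, of _ "areg v ! i"]) simp_all
  qed
qed

lemma simple_degen_monic:
  assumes D: "category D" and f: "f \<in> simple_degen D"
  shows "monic (Z D) f"
proof -
  have zarr: "is_zarr D f" and mono: "delta_mono (zlen (adom f)) (zlen (acod f)) (amap f)"
    using f unfolding simple_degen_def cocartesian_def by auto
  interpret zig_map D "adom f" "acod f" "amap f" "areg f" "asing f" using zarr_zig_map[OF zarr] .
  show ?thesis
  proof (rule Z_monicI[OF zarr mono])
    show "monic D (asing f ! j)" if "j < zlen (adom f)" for j
      using simple_degen_slices_monic(1)[OF D f] that by blast
    show "\<exists>i\<le>zlen (acod f). hat (amap f) i = k \<and> monic D (areg f ! i)" if "k \<le> zlen (adom f)" for k
      using hat_surj[OF fs delta_mono_imp_distinct[OF mono] that] simple_degen_slices_monic(2)[OF D f]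
      by blast
  qed
qed

theorem lemma3p6:
  fixes C :: "'c cat" and n :: nat and f :: "'c zt"
  assumes "category C"
    and "f \<in> degen n C"
  shows "monic (Zit n C) f"
  using assms(2)
proof (induction n arbitrary: f)
  case 0
  then show ?case using iso_imp_monic[OF lift_category[OF assms(1)]] by (simp add: Zit_def)
next
  case (Suc k)
  have cat: "category (Zit k C)" using assms(1) by (rule Zit_category)
  have generators_monic: "monic (Z (Zit k C)) s"
    if "s \<in> simple_degen (Zit k C) \<union> parallel_degen (Zit k C) (degen k C)" for s
    using that simple_degen_monic[OF cat] parallel_degen_monic Suc.IH by blast
  have "f \<in> gen (Z (Zit k C)) (simple_degen (Zit k C) \<union> parallel_degen (Zit k C) (degen k C))"
    using Suc.prems by simp
  then have "monic (Z (Zit k C)) f"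
    using gen_monic[OF Z_category[OF cat]] generators_monic by blast
  then show ?case by (simp add: Zit_Suc)
qed

end
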